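(* For a generic Hankel tensor $\mathcal{H}\in\operatorname{H}^3(\mathbb{C}^n)$, its border rank satisfies $\underline{\operatorname{rank}}(\mathcal{H})\ge\left\lfloor\frac{3n-1}{2}\right\rfloor$.
   Context: A tensor $\mathcal{H}\in\operatorname{T}^3(\mathbb{C}^n)$ is Hankel if $\mathcal{H}_{ijk}=h_{i+j+k-3}$ for some vector $h=(h_0,\dots,h_{3(n-1)})$; $\operatorname{H}^3(\mathbb{C}^n)\cong\mathbb{C}^{3n-2}$ is the space of such tensors and "generic" means outside a proper Zariski-closed subset. The border rank $\underline{\operatorname{rank}}(\mathcal{A})$ of $\mathcal{A}\in\mathbb{C}^n\otimes\mathbb{C}^n\otimes\mathbb{C}^n$ is the least $r$ such that $\mathcal{A}$ is a limit of tensors of the form $\sum_{i=1}^r u_i\otimes v_i\otimes w_i$. *)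

theory Defs
  imports "HOL-Analysis.Analysis"
begin

text \<open>Tensors in C^n (x) C^n (x) C^n are represented as functions nat => nat => nat => complex,
  of which only the entries with indices < n matter (indices are 0-based).\<close>
type_synonym ctensor3 = "nat \<Rightarrow> nat \<Rightarrow> nat \<Rightarrow> complex"

definition rank_le :: "nat \<Rightarrow> nat \<Rightarrow> ctensor3 \<Rightarrow> bool" where
  "rank_le n r T \<longleftrightarrow> (\<exists>u v w :: nat \<Rightarrow> nat \<Rightarrow> complex.
     \<forall>i<n. \<forall>j<n. \<forall>k<n. T i j k = (\<Sum>l<r. u l i * v l j * w l k))"

text \<open>T is a limit of tensors of rank at most r (entrywise convergence, equivalent to
  convergence in the finite-dimensional space).\<close>
definition border_rank_le :: "nat \<Rightarrow> nat \<Rightarrow> ctensor3 \<Rightarrow> bool" where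
  "border_rank_le n r T \<longleftrightarrow> (\<exists>S :: nat \<Rightarrow> ctensor3. (\<forall>m. rank_le n r (S m)) \<and>
     (\<forall>i<n. \<forall>j<n. \<forall>k<n. (\<lambda>m. S m i j k) \<longlonglongrightarrow> T i j k))"

definition border_rank :: "nat \<Rightarrow> ctensor3 \<Rightarrow> nat" where
  "border_rank n T = (LEAST r. border_rank_le n r T)"

text \<open>Hankel tensor with H_{ijk} = h_{i+j+k} (0-based indices; the paper's
  H_{ijk} = h_{i+j+k-3} with 1-based indices).\<close>
definition hankel :: "(nat \<Rightarrow> complex) \<Rightarrow> ctensor3" where
  "hankel h = (\<lambda>i j k. h (i + j + k))"

text \<open>Polynomial functions on C^m (points are nat => complex, only coordinates < m are used).\<close>
inductive_set poly_fun :: "nat \<Rightarrow> ((nat \<Rightarrow> complex) \<Rightarrow> complex) set" for m :: nat where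
  const: "(\<lambda>x. c) \<in> poly_fun m"
| var: "i < m \<Longrightarrow> (\<lambda>x. x i) \<in> poly_fun m"
| add: "p \<in> poly_fun m \<Longrightarrow> q \<in> poly_fun m \<Longrightarrow> (\<lambda>x. p x + q x) \<in> poly_fun m"
| mult: "p \<in> poly_fun m \<Longrightarrow> q \<in> poly_fun m \<Longrightarrow> (\<lambda>x. p x * q x) \<in> poly_fun m"

definition zariski_closed :: "nat \<Rightarrow> (nat \<Rightarrow> complex) set \<Rightarrow> bool" where
  "zariski_closed m Z \<longleftrightarrow> (\<exists>F. F \<subseteq> poly_fun m \<and> Z = {x. \<forall>p\<in>F. p x = 0})"

end

theory Submission
  imports Defs "Jordan_Normal_Form.DL_Rank"
begin

text \<open>Let \<open>d = \<lfloor>(n-1)/2\<rfloor>\<close>, so that \<open>n + d = \<lfloor>(3n-1)/2\<rfloor>\<close>. Restrict the first factor of \<open>T\<close>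
  to the three slices \<open>T\<^sub>d\<close>, \<open>T\<^sub>0\<close>, \<open>T\<^bsub>2d\<^esub>\<close> and form the Koszul flattening of the resulting
  tensor in \<open>\<complex>\<^sup>3 \<otimes> \<complex>\<^sup>n \<otimes> \<complex>\<^sup>n\<close>: the \<open>3n \<times> 3n\<close> block matrix whose block \<open>(p, q)\<close>
  is \<open>\<epsilon>\<^bsub>pqs\<^esub> T\<^sub>s\<close>. By antisymmetry of \<open>\<epsilon>\<close> a rank-one tensor contributes a matrix of rank
  at most 2, so if \<open>T\<close> has rank \<open>r < n + d\<close> then every \<open>(2n+2d)\<close>-minor vanishes, and by
  continuity of the determinant the same holds for border rank \<open>r\<close>. For a suitable minor the
  determinant is a polynomial in the Hankel vector \<open>h\<close> which does not vanish at the unit vector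
  \<open>h = e\<^bsub>n-1+d\<^esub>\<close>, where the minor is triangular with nonzero diagonal; its zero set is the
  required proper Zariski-closed set.\<close>

lemma poly_fun_sum:
  assumes "finite S" "\<And>s. s \<in> S \<Longrightarrow> f s \<in> poly_fun m"
  shows "(\<lambda>x. \<Sum>s\<in>S. f s x) \<in> poly_fun m"
  using assms
proof (induction S rule: finite_induct)
  case empty
  then show ?case using poly_fun.const[of 0 m] by simp
next
  case (insert s S)
  then show ?case using poly_fun.add[of "f s" m "\<lambda>x. \<Sum>s\<in>S. f s x"] by simp
qed

lemma poly_fun_prod:
  assumes "finite S" "\<And>s. s \<in> S \<Longrightarrow> f s \<in> poly_fun m"
  shows "(\<lambda>x. \<Prod>s\<in>S. f s x) \<in> poly_fun m"
  using assms
proof (induction S rule: finite_induct)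
  case empty
  then show ?case using poly_fun.const[of 1 m] by simp
next
  case (insert s S)
  then show ?case using poly_fun.mult[of "f s" m "\<lambda>x. \<Prod>s\<in>S. f s x"] by simp
qed

lemma det_in_poly_fun:
  assumes "\<And>x. M x \<in> carrier_mat N N"
    and "\<And>a b. a < N \<Longrightarrow> b < N \<Longrightarrow> (\<lambda>x. M x $$ (a, b)) \<in> poly_fun m"
  shows "(\<lambda>x. Determinant.det (M x)) \<in> poly_fun m"
proof -
  have "(\<lambda>x. Determinant.det (M x)) =
      (\<lambda>x. \<Sum>p\<in>{p. p permutes {0..<N}}. signof p * (\<Prod>a = 0..<N. M x $$ (a, p a)))"
    using det_def'[OF assms(1)] by blast
  also have "\<dots> \<in> poly_fun m"
    using assms(2) permutes_in_image
    by (intro poly_fun_sum poly_fun_prod poly_fun.mult poly_fun.const)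
       (auto simp: finite_permutations)
  finally show ?thesis .
qed

lemma tendsto_det:
  fixes M :: "'b \<Rightarrow> 'a :: real_normed_field mat"
  assumes "\<And>t. M t \<in> carrier_mat N N" "A \<in> carrier_mat N N"
    and "\<And>a b. a < N \<Longrightarrow> b < N \<Longrightarrow> ((\<lambda>t. M t $$ (a, b)) \<longlongrightarrow> A $$ (a, b)) F"
  shows "((\<lambda>t. Determinant.det (M t)) \<longlongrightarrow> Determinant.det A) F"
  unfolding det_def'[OF assms(1)] det_def'[OF assms(2)]
  using assms(3) permutes_in_image
  by (intro tendsto_sum tendsto_mult_left tendsto_prod) fastforce

lemma (in vec_space) rank_le_card_of_sum_of_products:
  assumes "A \<in> carrier_mat n nc" "finite S"
    and "\<And>a b. a < n \<Longrightarrow> b < nc \<Longrightarrow> A $$ (a, b) = (\<Sum>s\<in>S. f a s * g s b)"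
  shows "rank A \<le> card S"
proof -
  have "rank (mat n nc (\<lambda>(a, b). \<Sum>s\<in>S. f a s * g s b)) \<le> card S"
    using \<open>finite S\<close>
  proof (induction S rule: finite_induct)
    case empty
    show ?case by (simp add: zero_mat_def[symmetric] rank_0I)
  next
    case (insert s S)
    let ?B = "mat n nc (\<lambda>(a, b). \<Sum>s\<in>S. f a s * g s b)"
    let ?C = "mat n nc (\<lambda>(a, b). f a s * g s b)"
    have "mat n nc (\<lambda>(a, b). \<Sum>s\<in>insert s S. f a s * g s b) = ?C + ?B"
      using insert.hyps by auto
    moreover have "rank ?C \<le> 1"
      by (rule rank_le_1_product_entries[of ?C nc "\<lambda>a. f a s" "\<lambda>b. g s b"]) auto
    ultimately show ?case
      using rank_subadditive[of ?C nc ?B] insert by simp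
  qed
  moreover have "A = mat n nc (\<lambda>(a, b). \<Sum>s\<in>S. f a s * g s b)"
    using assms(1,3) by (intro eq_matI) auto
  ultimately show ?thesis by simp
qed

lemma (in vec_space) rank_le_card_of_sum_of_dependent_products:
  assumes "A \<in> carrier_mat n nc" "finite S" "s\<^sub>0 \<in> S" "c s\<^sub>0 \<noteq> 0"
    and "\<And>a b. a < n \<Longrightarrow> b < nc \<Longrightarrow> A $$ (a, b) = (\<Sum>s\<in>S. f a s * g s b)"
    and "\<And>a. a < n \<Longrightarrow> (\<Sum>s\<in>S. c s * f a s) = 0"
  shows "rank A \<le> card S - 1"
proof -
  have "A $$ (a, b) = (\<Sum>s\<in>S - {s\<^sub>0}. f a s * (g s b - c s / c s\<^sub>0 * g s\<^sub>0 b))"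
    if "a < n" "b < nc" for a b
  proof -
    have "(\<Sum>s\<in>S - {s\<^sub>0}. c s * f a s) = - (c s\<^sub>0 * f a s\<^sub>0)"
      using assms(6)[OF \<open>a < n\<close>] sum.remove[OF assms(2,3), of "\<lambda>s. c s * f a s"]
      by (simp add: eq_neg_iff_add_eq_0 add.commute)
    then have "f a s\<^sub>0 * g s\<^sub>0 b = - ((\<Sum>s\<in>S - {s\<^sub>0}. c s * f a s) / c s\<^sub>0 * g s\<^sub>0 b)"
      using assms(4) by simp
    also have "\<dots> = - (\<Sum>s\<in>S - {s\<^sub>0}. f a s * (c s / c s\<^sub>0 * g s\<^sub>0 b))"
      unfolding sum_divide_distrib sum_distrib_right
      by (intro arg_cong[of _ _ uminus] sum.cong) auto
    finally have "f a s\<^sub>0 * g s\<^sub>0 b = - (\<Sum>s\<in>S - {s\<^sub>0}. f a s * (c s / c s\<^sub>0 * g s\<^sub>0 b))" .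
    then show ?thesis
      using assms(5)[OF that] sum.remove[OF assms(2,3), of "\<lambda>s. f a s * g s b"]
      by (simp add: right_diff_distrib sum_subtractf)
  qed
  then have "rank A \<le> card (S - {s\<^sub>0})"
    using assms(1,2) by (intro rank_le_card_of_sum_of_products) auto
  then show ?thesis using assms(2,3) by simp
qed

lemma rank_le_square: "rank_le n (n * n) T"
proof -
  have decomp: "T i j k = (\<Sum>l<n * n. T i (l div n) (l mod n) *
          (if j = l div n then 1 else 0) * (if k = l mod n then 1 else 0))"
    if "j < n" "k < n" for i j k
  proof -
    have "(j = l div n \<and> k = l mod n) \<longleftrightarrow> l = j * n + k" for l
      using that by auto
    then have "(\<Sum>l<n * n. T i (l div n) (l mod n) *
          (if j = l div n then 1 else 0) * (if k = l mod n then 1 else 0))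
        = (\<Sum>l<n * n. if l = j * n + k then T i j k else 0)"
      by (intro sum.cong) auto
    also have "\<dots> = T i j k"
    proof -
      have "j * n + k < Suc j * n"
        using that by simp
      also have "\<dots> \<le> n * n"
        using that by (intro mult_le_mono1) simp
      finally show ?thesis by simp
    qed
    finally show ?thesis by (rule sym)
  qed
  show ?thesis
    unfolding rank_le_def
    by (intro exI[where x = "\<lambda>l i. T i (l div n) (l mod n)"]
        exI[where x = "\<lambda>l j. if j = l div n then 1 else 0"]
        exI[where x = "\<lambda>l k. if k = l mod n then 1 else 0"] allI impI decomp)
qed

lemma border_rank_le_if_rank_le: "rank_le n r T \<Longrightarrow> border_rank_le n r T"
  unfolding border_rank_le_def by (intro exI[of _ "\<lambda>_. T"]) simp

lemma border_rank_geI: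
  assumes "\<And>r. border_rank_le n r T \<Longrightarrow> m \<le> r"
  shows "m \<le> border_rank n T"
  unfolding border_rank_def
  using assms LeastI_ex[of "\<lambda>r. border_rank_le n r T"] border_rank_le_if_rank_le rank_le_square
  by blast

text \<open>\<open>levi_civita p q\<close> is \<open>\<epsilon>\<^bsub>pqs\<^esub>\<close> with \<open>s = 3 - p - q\<close> the remaining index of \<open>{0, 1, 2}\<close>.\<close>

definition levi_civita :: "nat \<Rightarrow> nat \<Rightarrow> complex" where
  "levi_civita p q = (if p < 3 \<and> q < 3 \<and> p \<noteq> q then if q = (p + 1) mod 3 then 1 else -1 else 0)"

lemma levi_civita_contraction:
  fixes x :: "nat \<Rightarrow> complex"
  assumes "p < 3"
  shows "(\<Sum>s\<in>{0, 1, 2}. x s * (levi_civita p s * x (3 - p - s))) = 0"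
proof -
  have "p = 0 \<or> p = 1 \<or> p = 2" using assms by linarith
  then show ?thesis
    by (elim disjE) (simp_all add: levi_civita_def)
qed

definition slice_index :: "nat \<Rightarrow> nat \<Rightarrow> nat" where
  "slice_index d s = (if s = 0 then d else if s = 1 then 0 else 2 * d)"

lemma slice_index_le: "slice_index d s \<le> 2 * d"
  unfolding slice_index_def by simp

lemma slice_index_less: "2 * d < n \<Longrightarrow> slice_index d s < n"
  using slice_index_le[of d s] by linarith

definition unit_at :: "nat \<Rightarrow> nat \<Rightarrow> complex" where
  "unit_at m t = (if t = m then 1 else 0)"

text \<open>Row \<open>a\<close> of the minor is row \<open>(row_block a, row_pos a)\<close> of the Koszul flattening and column
  \<open>b\<close> is column \<open>(col_block b, col_pos b)\<close>. Of the row block \<open>p = 0\<close> and the column block \<open>q = 0\<close>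
  only the \<open>2d\<close> indices \<open>j < d\<close> and \<open>j \<ge> n - d\<close> are kept, and the columns are ordered so
  that the minor is lower triangular at \<open>hankel (unit_at (n - 1 + d))\<close>.\<close>

definition row_block :: "nat \<Rightarrow> nat \<Rightarrow> nat \<Rightarrow> nat" where
  "row_block n d a = (if a < 2 * d then 0 else if a < n + 2 * d then 1 else 2)"

definition row_pos :: "nat \<Rightarrow> nat \<Rightarrow> nat \<Rightarrow> nat" where
  "row_pos n d a =
    (if a < d then a else if a < 2 * d then a + n - 2 * d
     else if a < n + 2 * d then a - 2 * d else a - n - 2 * d)"

definition col_block :: "nat \<Rightarrow> nat \<Rightarrow> nat \<Rightarrow> nat" where
  "col_block n d b =
    (if b < d then 1 else if b < n then 2 else if b < n + d then 0 else if b < n + 2 * d then 2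
     else if b < n + 3 * d then 1 else if b < n + 4 * d then 0 else 1)"

definition col_pos :: "nat \<Rightarrow> nat \<Rightarrow> nat \<Rightarrow> nat" where
  "col_pos n d b =
    (if b < d then n - d - 1 - b else if b < 2 * d then 3 * d - 1 - b
     else if b < n then n + 2 * d - 1 - b else if b < n + d then n + d - 1 - b
     else if b < n + 2 * d then n + 2 * d - 1 - b else if b < n + 3 * d then 2 * n + 2 * d - 1 - b
     else if b < n + 4 * d then 2 * n + 3 * d - 1 - b else 2 * n + 2 * d - 1 - b)"

definition koszul_minor :: "nat \<Rightarrow> nat \<Rightarrow> ctensor3 \<Rightarrow> complex mat" where
  "koszul_minor n d T = mat (2 * n + 2 * d) (2 * n + 2 * d) (\<lambda>(a, b).
     levi_civita (row_block n d a) (col_block n d b) *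
     T (slice_index d (3 - row_block n d a - col_block n d b)) (row_pos n d a) (col_pos n d b))"

lemma row_index_cases:
  assumes "2 * d < n" "a < 2 * n + 2 * d"
  obtains "a < d" "row_block n d a = 0" "row_pos n d a = a"
    | "d \<le> a" "a < 2 * d" "row_block n d a = 0" "row_pos n d a = a + n - 2 * d"
    | "2 * d \<le> a" "a < n + 2 * d" "row_block n d a = 1" "row_pos n d a = a - 2 * d"
    | "n + 2 * d \<le> a" "row_block n d a = 2" "row_pos n d a = a - n - 2 * d"
proof -
  consider "a < d" | "d \<le> a" "a < 2 * d" | "2 * d \<le> a" "a < n + 2 * d" | "n + 2 * d \<le> a"
    by linarith
  then show thesis
    using that by cases (simp_all add: row_block_def row_pos_def)
qed

lemma col_index_cases:
  assumes "2 * d < n" "b < 2 * n + 2 * d"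
  obtains "b < d" "col_block n d b = 1" "col_pos n d b = n - d - 1 - b"
    | "d \<le> b" "b < 2 * d" "col_block n d b = 2" "col_pos n d b = 3 * d - 1 - b"
    | "2 * d \<le> b" "b < n" "col_block n d b = 2" "col_pos n d b = n + 2 * d - 1 - b"
    | "n \<le> b" "b < n + d" "col_block n d b = 0" "col_pos n d b = n + d - 1 - b"
    | "n + d \<le> b" "b < n + 2 * d" "col_block n d b = 2" "col_pos n d b = n + 2 * d - 1 - b"
    | "n + 2 * d \<le> b" "b < n + 3 * d" "col_block n d b = 1" "col_pos n d b = 2 * n + 2 * d - 1 - b"
    | "n + 3 * d \<le> b" "b < n + 4 * d" "col_block n d b = 0" "col_pos n d b = 2 * n + 3 * d - 1 - b"
    | "n + 4 * d \<le> b" "col_block n d b = 1" "col_pos n d b = 2 * n + 2 * d - 1 - b"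
proof -
  consider "b < d" | "d \<le> b" "b < 2 * d" | "2 * d \<le> b" "b < n" | "n \<le> b" "b < n + d"
    | "n + d \<le> b" "b < n + 2 * d" | "n + 2 * d \<le> b" "b < n + 3 * d"
    | "n + 3 * d \<le> b" "b < n + 4 * d" | "n + 4 * d \<le> b"
    by linarith
  then show thesis
    using that assms(1) by cases (simp_all add: col_block_def col_pos_def)
qed

lemma koszul_minor_carrier: "koszul_minor n d T \<in> carrier_mat (2 * n + 2 * d) (2 * n + 2 * d)"
  unfolding koszul_minor_def by simp

lemma row_index_bounds:
  assumes "2 * d < n" "a < 2 * n + 2 * d"
  shows "row_block n d a < 3 \<and> row_pos n d a < n"
  by (cases rule: row_index_cases[OF assms]) (use assms in auto)

lemma col_index_bounds:
  assumes "2 * d < n" "b < 2 * n + 2 * d"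
  shows "col_block n d b < 3 \<and> col_pos n d b < n"
  by (cases rule: col_index_cases[OF assms]) (use assms in auto)

lemma koszul_minor_entry:
  assumes "a < 2 * n + 2 * d" "b < 2 * n + 2 * d"
  shows "koszul_minor n d T $$ (a, b) = levi_civita (row_block n d a) (col_block n d b) *
     T (slice_index d (3 - row_block n d a - col_block n d b)) (row_pos n d a) (col_pos n d b)"
  using assms unfolding koszul_minor_def by simp

lemma koszul_minor_hankel_unit_above_diagonal:
  assumes "2 * d < n" "a < b" "b < 2 * n + 2 * d"
  shows "koszul_minor n d (hankel (unit_at (n - 1 + d))) $$ (a, b) = 0"
proof -
  have a: "a < 2 * n + 2 * d" using assms by simp
  show ?thesis
    unfolding koszul_minor_entry[OF a assms(3)] hankel_def unit_at_def
    by (cases rule: row_index_cases[OF assms(1) a];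
        cases rule: col_index_cases[OF assms(1,3)])
      (use assms in \<open>auto simp: levi_civita_def slice_index_def\<close>)
qed

lemma koszul_minor_hankel_unit_diagonal:
  assumes "2 * d < n" "a < 2 * n + 2 * d"
  shows "koszul_minor n d (hankel (unit_at (n - 1 + d))) $$ (a, a) \<noteq> 0"
  unfolding koszul_minor_entry[OF assms(2,2)] hankel_def unit_at_def
  by (cases rule: row_index_cases[OF assms]; cases rule: col_index_cases[OF assms])
    (use assms in \<open>auto simp: levi_civita_def slice_index_def\<close>)

lemma det_koszul_minor_hankel_unit:
  assumes "2 * d < n"
  shows "Determinant.det (koszul_minor n d (hankel (unit_at (n - 1 + d)))) \<noteq> 0"
proof -
  let ?A = "koszul_minor n d (hankel (unit_at (n - 1 + d)))"
  have "Determinant.det ?A = prod_list (diag_mat ?A)"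
    using koszul_minor_hankel_unit_above_diagonal[OF assms]
    by (intro det_lower_triangular[OF _ koszul_minor_carrier]) auto
  moreover have "0 \<notin> set (diag_mat ?A)"
    using koszul_minor_hankel_unit_diagonal[OF assms]
    by (auto simp: diag_mat_def koszul_minor_def)
  ultimately show ?thesis
    by (simp add: prod_list_zero_iff)
qed

lemma koszul_minor_cong:
  assumes "2 * d < n" "\<And>i j k. i < n \<Longrightarrow> j < n \<Longrightarrow> k < n \<Longrightarrow> T i j k = T' i j k"
  shows "koszul_minor n d T = koszul_minor n d T'"
proof (rule eq_matI)
  fix a b
  assume "a < dim_row (koszul_minor n d T')" "b < dim_col (koszul_minor n d T')"
  then have "a < 2 * n + 2 * d" "b < 2 * n + 2 * d"
    by (simp_all add: koszul_minor_def)
  then show "koszul_minor n d T $$ (a, b) = koszul_minor n d T' $$ (a, b)"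
    using row_index_bounds[OF assms(1)] col_index_bounds[OF assms(1)] slice_index_less[OF assms(1)]
    by (simp add: koszul_minor_entry assms(2))
qed (simp_all add: koszul_minor_def)

lemma koszul_minor_add:
  "koszul_minor n d (\<lambda>i j k. T i j k + T' i j k) = koszul_minor n d T + koszul_minor n d T'"
  by (rule eq_matI) (simp_all add: koszul_minor_def distrib_left)

lemma rank_koszul_minor_rank_one:
  assumes "2 * d < n"
  shows "vec_space.rank (2 * n + 2 * d) (koszul_minor n d (\<lambda>i j k. u i * v j * w k)) \<le> 2"
proof -
  define f where "f a s = levi_civita (row_block n d a) s *
    u (slice_index d (3 - row_block n d a - s)) * v (row_pos n d a)" for a s
  define g where "g s b = (if col_block n d b = s then w (col_pos n d b) else 0)" for s b
  have entries: "koszul_minor n d (\<lambda>i j k. u i * v j * w k) $$ (a, b) = (\<Sum>s\<in>{0, 1, 2}. f a s * g s b)"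
    if "a < 2 * n + 2 * d" "b < 2 * n + 2 * d" for a b
  proof -
    have "col_block n d b = 0 \<or> col_block n d b = 1 \<or> col_block n d b = 2"
      using col_index_bounds[OF assms that(2)] by linarith
    then show ?thesis
      unfolding koszul_minor_entry[OF that] by (elim disjE) (simp_all add: f_def g_def)
  qed
  obtain c :: "nat \<Rightarrow> complex" and s\<^sub>0 where
    s\<^sub>0: "s\<^sub>0 \<in> {0, 1, 2}" and c: "c s\<^sub>0 \<noteq> 0"
    and dependent: "\<And>a. a < 2 * n + 2 * d \<Longrightarrow> (\<Sum>s\<in>{0, 1, 2}. c s * f a s) = 0"
  proof (cases "\<exists>s\<in>{0, 1, 2}. u (slice_index d s) \<noteq> 0")
    case True
    then obtain s\<^sub>0 where "s\<^sub>0 \<in> {0, 1, 2}" "u (slice_index d s\<^sub>0) \<noteq> 0" by blast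
    moreover have "(\<Sum>s\<in>{0, 1, 2}. u (slice_index d s) * f a s) = 0"
      if "a < 2 * n + 2 * d" for a
    proof -
      let ?p = "row_block n d a"
      have "(\<Sum>s\<in>{0, 1, 2}. u (slice_index d s) * f a s) =
          (\<Sum>s\<in>{0, 1, 2}. u (slice_index d s) * (levi_civita ?p s * u (slice_index d (3 - ?p - s))))
          * v (row_pos n d a)"
        unfolding f_def sum_distrib_right by (intro sum.cong) (simp_all add: ac_simps)
      then show ?thesis
        using levi_civita_contraction[where p = ?p and x = "\<lambda>s. u (slice_index d s)"]
          row_index_bounds[OF assms that] by simp
    qed
    ultimately show ?thesis
      using that[of s\<^sub>0 "\<lambda>s. u (slice_index d s)"] by blast
  next
    case False
    then have "u (slice_index d s) = 0" for s
      by (auto simp: slice_index_def)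
    then show ?thesis
      using that[of 0 "\<lambda>_. 1"] by (simp add: f_def)
  qed
  have "vec_space.rank (2 * n + 2 * d) (koszul_minor n d (\<lambda>i j k. u i * v j * w k))
      \<le> card {0, 1, 2 :: nat} - 1"
    by (rule vec_space.rank_le_card_of_sum_of_dependent_products[OF koszul_minor_carrier _ s\<^sub>0 c
          entries dependent]) simp_all
  then show ?thesis by simp
qed

lemma rank_koszul_minor_sum_of_rank_ones:
  assumes "2 * d < n"
  shows "vec_space.rank (2 * n + 2 * d)
           (koszul_minor n d (\<lambda>i j k. \<Sum>l<r. u l i * v l j * w l k)) \<le> 2 * r"
proof (induction r)
  case 0
  have "koszul_minor n d (\<lambda>i j k. \<Sum>l<0. u l i * v l j * w l k) = 0\<^sub>m (2 * n + 2 * d) (2 * n + 2 * d)"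
    by (rule eq_matI) (simp_all add: koszul_minor_def)
  then show ?case
    using vec_space.rank_0I by simp
next
  case (Suc r)
  let ?T = "\<lambda>i j k. \<Sum>l<r. u l i * v l j * w l k"
  have "koszul_minor n d (\<lambda>i j k. \<Sum>l<Suc r. u l i * v l j * w l k) =
      koszul_minor n d ?T + koszul_minor n d (\<lambda>i j k. u r i * v r j * w r k)"
    by (simp add: koszul_minor_add[symmetric])
  then show ?case
    using vec_space.rank_subadditive[OF koszul_minor_carrier[of n d ?T]
        koszul_minor_carrier[of n d "\<lambda>i j k. u r i * v r j * w r k"]]
      rank_koszul_minor_rank_one[OF assms, of "u r" "v r" "w r"] Suc.IH
    by simp
qed

lemma rank_koszul_minor_le:
  assumes "2 * d < n" "rank_le n r T"
  shows "vec_space.rank (2 * n + 2 * d) (koszul_minor n d T) \<le> 2 * r"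
proof -
  obtain u v w where "\<forall>i<n. \<forall>j<n. \<forall>k<n. T i j k = (\<Sum>l<r. u l i * v l j * w l k)"
    using assms(2) unfolding rank_le_def by blast
  then have "koszul_minor n d T = koszul_minor n d (\<lambda>i j k. \<Sum>l<r. u l i * v l j * w l k)"
    by (intro koszul_minor_cong[OF assms(1)]) simp
  then show ?thesis
    using rank_koszul_minor_sum_of_rank_ones[OF assms(1)] by simp
qed

lemma det_koszul_minor_eq_0:
  assumes "2 * d < n" "border_rank_le n r T" "r < n + d"
  shows "Determinant.det (koszul_minor n d T) = 0"
proof -
  obtain S where approx: "\<And>t. rank_le n r (S t)"
    and lim: "\<forall>i<n. \<forall>j<n. \<forall>k<n. (\<lambda>t. S t i j k) \<longlonglongrightarrow> T i j k"
    using assms(2) unfolding border_rank_le_def by blast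
  have "Determinant.det (koszul_minor n d (S t)) = 0" for t
  proof -
    have "vec_space.rank (2 * n + 2 * d) (koszul_minor n d (S t)) \<noteq> 2 * n + 2 * d"
      using rank_koszul_minor_le[OF assms(1) approx[of t]] assms(3) by linarith
    then show ?thesis
      using vec_space.det_rank_iff[OF koszul_minor_carrier] by blast
  qed
  then have "(\<lambda>t. Determinant.det (koszul_minor n d (S t))) \<longlonglongrightarrow> 0"
    by simp
  moreover have "(\<lambda>t. Determinant.det (koszul_minor n d (S t))) \<longlonglongrightarrow>
      Determinant.det (koszul_minor n d T)"
  proof (rule tendsto_det[OF koszul_minor_carrier koszul_minor_carrier])
    fix a b
    assume ab: "a < 2 * n + 2 * d" "b < 2 * n + 2 * d"
    let ?i = "slice_index d (3 - row_block n d a - col_block n d b)"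
    have "?i < n" "row_pos n d a < n" "col_pos n d b < n"
      using slice_index_less[OF assms(1)] row_index_bounds[OF assms(1) ab(1)]
        col_index_bounds[OF assms(1) ab(2)] by simp_all
    then have "(\<lambda>t. S t ?i (row_pos n d a) (col_pos n d b)) \<longlonglongrightarrow> T ?i (row_pos n d a) (col_pos n d b)"
      using lim by blast
    then show "(\<lambda>t. koszul_minor n d (S t) $$ (a, b)) \<longlonglongrightarrow> koszul_minor n d T $$ (a, b)"
      unfolding koszul_minor_entry[OF ab] by (rule tendsto_mult_left)
  qed
  ultimately show ?thesis
    using LIMSEQ_unique by metis
qed

lemma det_koszul_minor_hankel_in_poly_fun:
  assumes "2 * d < n"
  shows "(\<lambda>h. Determinant.det (koszul_minor n d (hankel h))) \<in> poly_fun (3 * n - 2)"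
proof (rule det_in_poly_fun[OF koszul_minor_carrier])
  fix a b
  assume ab: "a < 2 * n + 2 * d" "b < 2 * n + 2 * d"
  let ?t = "slice_index d (3 - row_block n d a - col_block n d b) + row_pos n d a + col_pos n d b"
  have "?t < 3 * n - 2"
    using row_index_bounds[OF assms ab(1)] col_index_bounds[OF assms ab(2)]
      slice_index_le[of d "3 - row_block n d a - col_block n d b"] assms by linarith
  then show "(\<lambda>h. koszul_minor n d (hankel h) $$ (a, b)) \<in> poly_fun (3 * n - 2)"
    unfolding koszul_minor_entry[OF ab] hankel_def
    by (intro poly_fun.mult poly_fun.const poly_fun.var)
qed

theorem theorem5p2:
  fixes n :: nat
  assumes "n \<ge> 1"
  shows "\<exists>Z. zariski_closed (3 * n - 2) Z \<and> Z \<noteq> UNIV \<and>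
           (\<forall>h. h \<notin> Z \<longrightarrow> border_rank n (hankel h) \<ge> (3 * n - 1) div 2)"
proof -
  define d where "d = (n - 1) div 2"
  have d: "2 * d < n" "(3 * n - 1) div 2 = n + d"
    using assms unfolding d_def by linarith+
  define Z where "Z = {h. Determinant.det (koszul_minor n d (hankel h)) = 0}"
  have "zariski_closed (3 * n - 2) Z"
    unfolding zariski_closed_def Z_def
    using det_koszul_minor_hankel_in_poly_fun[OF d(1)]
    by (intro exI[of _ "{\<lambda>h. Determinant.det (koszul_minor n d (hankel h))}"]) auto
  moreover have "Z \<noteq> UNIV"
    using det_koszul_minor_hankel_unit[OF d(1)] unfolding Z_def by blast
  moreover have "n + d \<le> border_rank n (hankel h)" if "h \<notin> Z" for h
    using that det_koszul_minor_eq_0[OF d(1)] unfolding Z_def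
    by (intro border_rank_geI) (meson mem_Collect_eq not_le)
  ultimately show ?thesis
    unfolding d(2) by blast
qed

end
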